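(* Let $\lambda_0=0$ and $\lambda_{n+1}=1/m_n$ for $n\ge0$ (so $\lambda_{n+1}=\tfrac12(\lambda_n+\sqrt{\lambda_n^2+4})$). Then: (1) $\sqrt n\le\lambda_n\le\sqrt{2n}$ for $n\ge0$; (2) $(\lambda_n)_n$ is increasing and divergent, $(\lambda_{n+1}/\lambda_n)_{n\ge1}$ is decreasing, and $\lambda_{n+1}/\lambda_n\to1$; (3) $\lambda_{n+1}^2-\lambda_n^2\to2$; (4) $\lambda_n^2/n\to2$; (5) $(\lambda_n^2-2n)/\log n\to-\tfrac12$; (6) $f(s)/\sqrt{2s}\to1$ as $s\to\infty$; (7) $f'(s)\sqrt{2s}\to1$ as $s\to\infty$.
   Context: Let $(m_n)_{n\ge0}$ be the unique sequence of positive reals with $m_0=1$ and $(1+m_1+\cdots+m_n)\,m_n=1$ for $n\ge1$. It is a Hausdorff moment sequence: let $\mu$ be the unique probability measure on $[0,1]$ with $\int_0^1t^n\,d\mu(t)=m_n$. For $s>0$ let $f(s)=\int_0^1\frac{1-t^s}{1-t}\,d\mu(t)$. *)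

theory Defs
  imports "HOL-Probability.Probability"
begin

definition mseq_prop :: "(nat \<Rightarrow> real) \<Rightarrow> bool" where
  "mseq_prop m \<longleftrightarrow> (\<forall>n. m n > 0) \<and> m 0 = 1 \<and>
     (\<forall>n\<ge>1. (1 + (\<Sum>k=1..n. m k)) * m n = 1)"

definition mseq :: "nat \<Rightarrow> real" where
  "mseq = (THE m. mseq_prop m)"

definition lam :: "nat \<Rightarrow> real" where
  "lam n = (if n = 0 then 0 else 1 / mseq (n - 1))"

definition fmu :: "real measure \<Rightarrow> real \<Rightarrow> real" where
  "fmu \<mu> s = (\<integral>t. (1 - t powr s) / (1 - t) \<partial>\<mu>)"

end

theory Submission
  imports Defs "HOL-Real_Asymp.Real_Asymp"
begin

text \<open>Since lambda_(n+1) = 1/m_n is the positive root of x = lambda_n + 1/x, one gets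
  lambda_(n+1)^2 - lambda_n^2 = 2 - 1/lambda_(n+1)^2. Summing, 2n - lambda_n^2 is the sum of
  the 1/lambda_k^2 for k \<le> n; it lies between 0 and the harmonic number H_n, and its terms
  differ from 1/(2k) by O(log k / k^2).

  For the measure, f(n) = m_0 + ... + m_(n-1) = lambda_n, f is increasing, and
  differentiating under the integral sign, f'(s) = \<integral> t^s (- log t) / (1 - t) d\<mu>, which lies
  between the moments \<integral> t^s and \<integral> t^(s-1). For n \<le> s < n + 1 this squeezes f(s) between
  lambda_n and lambda_(n+1), and f'(s) between 1/lambda_(n+2) and 1/lambda_n, which gives
  (6) and (7).\<close>

lemma minus_inverse_strict_mono:
  fixes x y :: real
  assumes "0 < x" "x < y"
  shows "x - 1 / x < y - 1 / y"
proof -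
  have "1 / y < 1 / x"
    using assms by (simp add: frac_less2)
  with assms show ?thesis
    by linarith
qed

lemma minus_inverse_inj:
  fixes x y :: real
  assumes "0 < x" "0 < y" "x - 1 / x = y - 1 / y"
  shows "x = y"
  using assms minus_inverse_strict_mono[of x y] minus_inverse_strict_mono[of y x]
  by (metis linorder_neqE less_irrefl)

lemma harm_le_ln_plus_1: "harm n \<le> ln (real n) + (1::real)"
proof (cases "n = 0")
  case False
  then have "harm n - ln (real n) \<le> harm 1 - ln (real 1)"
    by (intro euler_mascheroni_sequence_decreasing) auto
  then show ?thesis
    by (simp add: harm_def)
qed (simp add: harm_def)

lemma summable_ln_plus_1_over_sq: "summable (\<lambda>k. (ln (real k) + 1) / (real k)\<^sup>2)"
proof (rule summable_comparison_test_bigo)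
  show "summable (\<lambda>k. norm (real k powr (-3/2)))"
    by (simp add: summable_real_powr_iff)
  show "(\<lambda>k. (ln (real k) + 1) / (real k)\<^sup>2) \<in> O(\<lambda>k. real k powr (-3/2))"
    by real_asymp
qed

lemma tendsto_at_top_sandwich_nat:
  fixes g :: "real \<Rightarrow> real" and a b :: "nat \<Rightarrow> real"
  assumes "a \<longlonglongrightarrow> l" "b \<longlonglongrightarrow> l"
    and bounds: "\<And>n s. n \<ge> N \<Longrightarrow> real n \<le> s \<Longrightarrow> s < real n + 1 \<Longrightarrow> a n \<le> g s \<and> g s \<le> b n"
  shows "(g \<longlongrightarrow> l) at_top"
proof (rule tendsto_sandwich)
  have floor: "filterlim (\<lambda>s::real. nat \<lfloor>s\<rfloor>) sequentially at_top"
    by (rule filterlim_compose[OF filterlim_nat_sequentially filterlim_floor_sequentially])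
  show "((\<lambda>s::real. a (nat \<lfloor>s\<rfloor>)) \<longlongrightarrow> l) at_top"
    using filterlim_compose[OF assms(1) floor] by simp
  show "((\<lambda>s::real. b (nat \<lfloor>s\<rfloor>)) \<longlongrightarrow> l) at_top"
    using filterlim_compose[OF assms(2) floor] by simp
  have "\<forall>\<^sub>F s::real in at_top. a (nat \<lfloor>s\<rfloor>) \<le> g s \<and> g s \<le> b (nat \<lfloor>s\<rfloor>)"
  proof (rule eventually_at_top_linorderI[of "real N"])
    fix s :: real
    assume "real N \<le> s"
    then show "a (nat \<lfloor>s\<rfloor>) \<le> g s \<and> g s \<le> b (nat \<lfloor>s\<rfloor>)"
      by (intro bounds) (auto simp: le_nat_iff le_floor_iff)
  qed
  then show "\<forall>\<^sub>F s in at_top. a (nat \<lfloor>s\<rfloor>) \<le> g s" "\<forall>\<^sub>F s in at_top. g s \<le> b (nat \<lfloor>s\<rfloor>)"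
    by (auto elim: eventually_mono)
qed

lemma abs_difference_quotient_le:
  fixes f f' :: "real \<Rightarrow> real"
  assumes "\<And>u. u \<in> ball s r \<Longrightarrow> (f has_real_derivative f' u) (at u) \<and> \<bar>f' u\<bar> \<le> B"
    and "s + h \<in> ball s r" "h \<noteq> 0"
  shows "\<bar>(f (s + h) - f s) / h\<bar> \<le> B"
proof -
  have "norm (f (s + h) - f s) \<le> B * norm (s + h - s)"
  proof (rule field_differentiable_bound[where S = "ball s r"])
    show "(f has_field_derivative f' u) (at u within ball s r)" if "u \<in> ball s r" for u
      using assms(1)[OF that] by (blast intro: has_field_derivative_at_within)
  qed (use assms in \<open>auto intro: centre_in_ball[THEN iffD2] simp: dist_real_def\<close>)
  with \<open>h \<noteq> 0\<close> show ?thesis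
    by (simp add: divide_le_eq abs_divide)
qed

lemma integral_difference_quotient_tendsto:
  fixes g g' :: "real \<Rightarrow> 'a \<Rightarrow> real" and M :: "'a measure" and Y :: "nat \<Rightarrow> real"
  assumes Y: "Y \<longlonglongrightarrow> 0" "\<And>i. Y i \<noteq> 0" "\<And>i. s + Y i \<in> ball s r"
    and integrable: "\<And>u. u \<in> ball s r \<Longrightarrow> integrable M (g u)"
    and "g' s \<in> borel_measurable M" "integrable M w"
    and deriv: "AE x in M. \<forall>u \<in> ball s r.
      ((\<lambda>v. g v x) has_real_derivative g' u x) (at u) \<and> \<bar>g' u x\<bar> \<le> w x"
  shows "(\<lambda>i. ((\<integral>x. g (s + Y i) x \<partial>M) - (\<integral>x. g s x \<partial>M)) / Y i) \<longlonglongrightarrow> (\<integral>x. g' s x \<partial>M)"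
proof -
  have s: "s \<in> ball s r"
    using Y(3)[of 0] by (auto simp: dist_real_def)
  have Y_at: "filterlim Y (at 0) sequentially"
    using Y by (simp add: filterlim_at)
  have lim: "(\<lambda>i. \<integral>x. (g (s + Y i) x - g s x) / Y i \<partial>M) \<longlonglongrightarrow> (\<integral>x. g' s x \<partial>M)"
  proof (rule integral_dominated_convergence[where w = w])
    show "(\<lambda>x. (g (s + Y i) x - g s x) / Y i) \<in> borel_measurable M" for i
      using integrable[OF Y(3)[of i]] integrable[OF s]
      by (intro borel_measurable_divide borel_measurable_diff borel_measurable_const) auto
    show "AE x in M. (\<lambda>i. (g (s + Y i) x - g s x) / Y i) \<longlonglongrightarrow> g' s x"
      using deriv
    proof eventually_elim
      case (elim x)
      with s have "((\<lambda>h. (g (s + h) x - g s x) / h) \<longlongrightarrow> g' s x) (at 0)"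
        by (simp add: DERIV_def)
      from filterlim_compose[OF this Y_at] show ?case .
    qed
    show "AE x in M. norm ((g (s + Y i) x - g s x) / Y i) \<le> w x" for i
      using deriv
    proof eventually_elim
      case (elim x)
      then show ?case
        using abs_difference_quotient_le[of s r "\<lambda>v. g v x" "\<lambda>u. g' u x" "w x" "Y i"] Y by simp
    qed
  qed fact+
  have eq: "(\<integral>x. (g (s + Y i) x - g s x) / Y i \<partial>M) = ((\<integral>x. g (s + Y i) x \<partial>M) - (\<integral>x. g s x \<partial>M)) / Y i" for i
    using integrable[OF Y(3)[of i]] integrable[OF s] by simp
  show ?thesis
    using lim unfolding eq .
qed

lemma has_real_derivative_integral:
  fixes g g' :: "real \<Rightarrow> 'a \<Rightarrow> real" and M :: "'a measure"
  assumes "r > 0"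
    and integrable: "\<And>u. u \<in> ball s r \<Longrightarrow> integrable M (g u)"
    and "g' s \<in> borel_measurable M" "integrable M w"
    and deriv: "AE x in M. \<forall>u \<in> ball s r.
      ((\<lambda>v. g v x) has_real_derivative g' u x) (at u) \<and> \<bar>g' u x\<bar> \<le> w x"
  shows "((\<lambda>u. \<integral>x. g u x \<partial>M) has_real_derivative (\<integral>x. g' s x \<partial>M)) (at s)"
  unfolding DERIV_def
proof (rule tendsto_at_iff_sequentially[THEN iffD2], intro allI impI)
  fix X :: "nat \<Rightarrow> real"
  assume X_ne: "\<forall>i. X i \<in> UNIV - {0}" and X: "X \<longlonglongrightarrow> 0"
  obtain N where N: "\<And>i. i \<ge> N \<Longrightarrow> \<bar>X i\<bar> < r"
    using LIMSEQ_D[OF X \<open>r > 0\<close>] by auto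
  have "(\<lambda>i. ((\<integral>x. g (s + X (i + N)) x \<partial>M) - (\<integral>x. g s x \<partial>M)) / X (i + N))
      \<longlonglongrightarrow> (\<integral>x. g' s x \<partial>M)"
  proof (rule integral_difference_quotient_tendsto[where r = r and w = w])
    show "(\<lambda>i. X (i + N)) \<longlonglongrightarrow> 0"
      using LIMSEQ_ignore_initial_segment[OF X] by simp
    show "X (i + N) \<noteq> 0" "s + X (i + N) \<in> ball s r" for i
      using X_ne N[of "i + N"] by (auto simp: dist_real_def)
  qed (use assms in auto)
  then show "((\<lambda>h. ((\<integral>x. g (s + h) x \<partial>M) - (\<integral>x. g s x \<partial>M)) / h) \<circ> X) \<longlonglongrightarrow> (\<integral>x. g' s x \<partial>M)"
    unfolding comp_def by (rule LIMSEQ_offset)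
qed

lemma AE_less_1_if_moments_tendsto_0:
  fixes \<mu> :: "real measure"
  assumes "prob_space \<mu>" and sets: "sets \<mu> = sets borel" and "emeasure \<mu> {0..1} = 1"
    and moments: "(\<lambda>n. \<integral>t. t ^ n \<partial>\<mu>) \<longlonglongrightarrow> 0"
  shows "AE t in \<mu>. 0 \<le> t \<and> t < 1"
proof -
  interpret prob_space \<mu>
    by fact
  have "prob {0..1} = 1"
    using \<open>emeasure \<mu> {0..1} = 1\<close> by (simp add: emeasure_eq_measure)
  then have unit: "AE t in \<mu>. 0 \<le> t \<and> t \<le> 1"
    by (auto dest: AE_prob_1)
  have measurable: "f \<in> borel_measurable \<mu>" if "f \<in> borel_measurable borel" for f :: "real \<Rightarrow> real"
    using that by (subst measurable_cong_sets[OF sets refl])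
  have "measure \<mu> {1} \<le> (\<integral>t. t ^ n \<partial>\<mu>)" for n
  proof -
    have "measure \<mu> {1} = (\<integral>t. indicator {1} t \<partial>\<mu>)"
      using sets by (simp add: sets_eq_imp_space_eq)
    also have "\<dots> \<le> (\<integral>t. t ^ n \<partial>\<mu>)"
    proof (rule integral_mono_AE)
      show "integrable \<mu> (indicator {1} :: real \<Rightarrow> real)"
        by (rule integrable_const_bound[where B = 1]) (auto intro: measurable simp: indicator_def)
      show "integrable \<mu> (\<lambda>t. t ^ n)"
      proof (rule integrable_const_bound[where B = 1])
        show "AE t in \<mu>. norm (t ^ n) \<le> 1"
          using unit by eventually_elim (simp add: power_le_one)
      qed (auto intro: measurable)
      show "AE t in \<mu>. indicator {1} t \<le> t ^ n"
        using unit by eventually_elim (auto simp: indicator_def)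
    qed
    finally show ?thesis .
  qed
  then have "measure \<mu> {1} \<le> 0"
    using moments by (intro LIMSEQ_le[OF tendsto_const]) auto
  then have "measure \<mu> {1} = 0"
    using measure_nonneg[of \<mu> "{1}"] by linarith
  then have "{1} \<in> null_sets \<mu>"
    using sets by (auto simp: null_sets_def emeasure_eq_measure)
  then have "AE t in \<mu>. t \<noteq> 1"
    by (auto dest: AE_not_in)
  with unit show ?thesis
    by eventually_elim auto
qed

section \<open>The sequence lambda\<close>

fun lam_iter :: "nat \<Rightarrow> real" where
  "lam_iter 0 = 0"
| "lam_iter (Suc n) = (lam_iter n + sqrt ((lam_iter n)\<^sup>2 + 4)) / 2"

declare lam_iter.simps(2) [simp del]

lemma lam_iter_nonneg: "lam_iter n \<ge> 0"
  by (induction n) (simp_all add: lam_iter.simps(2))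

lemma lam_iter_1 [simp]: "lam_iter (Suc 0) = 1"
  by (simp add: lam_iter.simps(2))

lemma lam_iter_Suc_ge_1: "lam_iter (Suc n) \<ge> 1"
proof -
  have "sqrt ((lam_iter n)\<^sup>2 + 4) \<ge> sqrt 4"
    by (intro real_sqrt_le_mono) auto
  then show ?thesis
    using lam_iter_nonneg[of n] by (simp add: lam_iter.simps(2))
qed

text \<open>lam_iter (Suc n) is the positive root of x^2 = lam_iter n * x + 1.\<close>
lemma lam_iter_Suc_minus_inverse: "lam_iter (Suc n) - 1 / lam_iter (Suc n) = lam_iter n"
proof -
  define a L where "a = lam_iter n" and "L = lam_iter (Suc n)"
  have "2 * L - a = sqrt (a\<^sup>2 + 4)"
    by (simp add: a_def L_def lam_iter.simps(2) field_simps)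
  then have "(2 * L - a)\<^sup>2 = a\<^sup>2 + 4"
    by simp
  then have "L * L = a * L + 1"
    by (simp add: power2_eq_square algebra_simps)
  moreover have "L \<ge> 1"
    using lam_iter_Suc_ge_1 by (simp add: L_def)
  ultimately show ?thesis
    by (simp add: a_def L_def field_simps)
qed

text \<open>With S_n = 1 + m_1 + ... + m_n the defining relation reads S_n - 1/S_n = S_(n-1), which
  determines S_n from S_(n-1) because x - 1/x is injective on the positive reals; the
  sequence lambda_(n+1) satisfies the same recursion.\<close>
lemma mseq_prop_partial_sums:
  assumes "mseq_prop m"
  shows "1 + (\<Sum>k=1..n. m k) = lam_iter (Suc n)"
proof (induction n)
  case 0
  then show ?case by simp
next
  case (Suc n)
  define S where "S = 1 + (\<Sum>k=1..Suc n. m k)"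
  have "Suc n \<ge> 1"
    by simp
  then have m_pos: "m (Suc n) > 0" and S_m: "S * m (Suc n) = 1"
    using assms unfolding mseq_prop_def S_def by blast+
  then have "S > 0"
    by (metis zero_less_mult_pos2 zero_less_one)
  with S_m have m_eq: "m (Suc n) = 1 / S"
    by (simp add: field_simps)
  have "S = lam_iter (Suc n) + m (Suc n)"
    using Suc.IH by (simp add: S_def)
  then have "S - 1 / S = lam_iter (Suc (Suc n)) - 1 / lam_iter (Suc (Suc n))"
    unfolding lam_iter_Suc_minus_inverse m_eq by linarith
  moreover have "lam_iter (Suc (Suc n)) > 0"
    using lam_iter_Suc_ge_1[of "Suc n"] by linarith
  ultimately have "S = lam_iter (Suc (Suc n))"
    using \<open>S > 0\<close> minus_inverse_inj by blast
  then show ?case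
    by (simp add: S_def)
qed

lemma sum_inverse_lam_iter: "(\<Sum>k<n. 1 / lam_iter (Suc k)) = lam_iter n"
proof (induction n)
  case (Suc n)
  have "(\<Sum>k<Suc n. 1 / lam_iter (Suc k)) = lam_iter n + 1 / lam_iter (Suc n)"
    using Suc.IH by simp
  then show ?case
    using lam_iter_Suc_minus_inverse[of n] by linarith
qed simp

lemma mseq_prop_iff: "mseq_prop m \<longleftrightarrow> m = (\<lambda>n. 1 / lam_iter (Suc n))"
proof
  assume m: "mseq_prop m"
  show "m = (\<lambda>n. 1 / lam_iter (Suc n))"
  proof
    fix n
    show "m n = 1 / lam_iter (Suc n)"
    proof (cases "n = 0")
      case True
      with m show ?thesis
        by (simp add: mseq_prop_def)
    next
      case False
      then have "n \<ge> 1"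
        by simp
      with m have "(1 + (\<Sum>k=1..n. m k)) * m n = 1"
        unfolding mseq_prop_def by blast
      then have "lam_iter (Suc n) * m n = 1"
        by (simp only: mseq_prop_partial_sums[OF m])
      with lam_iter_Suc_ge_1[of n] show ?thesis
        by (simp add: field_simps)
    qed
  qed
next
  assume m: "m = (\<lambda>n. 1 / lam_iter (Suc n))"
  have pos: "lam_iter (Suc n) > 0" for n
    using lam_iter_Suc_ge_1[of n] by linarith
  have sums: "1 + (\<Sum>k=1..n. 1 / lam_iter (Suc k)) = lam_iter (Suc n)" for n
    using sum_inverse_lam_iter[of "Suc n"]
    by (simp only: sum.lessThan_Suc_shift) (simp add: sum.atLeast1_atMost_eq)
  show "mseq_prop m"
    unfolding mseq_prop_def m
  proof (intro conjI allI impI)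
    show "(1 + (\<Sum>k=1..n. 1 / lam_iter (Suc k))) * (1 / lam_iter (Suc n)) = 1" for n
      unfolding sums using pos[of n] by simp
  qed (simp_all add: pos)
qed

lemma mseq_eq: "mseq = (\<lambda>n. 1 / lam_iter (Suc n))"
  unfolding mseq_def mseq_prop_iff by simp

lemma lam_eq_lam_iter: "lam = lam_iter"
proof
  fix n
  show "lam n = lam_iter n"
    by (cases n) (simp_all add: lam_def mseq_eq)
qed

lemma lam_0 [simp]: "lam 0 = 0"
  by (simp add: lam_eq_lam_iter)

lemma lam_Suc_ge_1: "lam (Suc n) \<ge> 1"
  by (simp add: lam_eq_lam_iter lam_iter_Suc_ge_1)

lemma lam_nonneg: "lam n \<ge> 0"
  by (simp add: lam_eq_lam_iter lam_iter_nonneg)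

lemma lam_pos: "n \<ge> 1 \<Longrightarrow> lam n > 0"
  using lam_Suc_ge_1[of "n - 1"] by simp

lemma lam_Suc_minus_inverse: "lam (Suc n) - 1 / lam (Suc n) = lam n"
  by (simp add: lam_eq_lam_iter lam_iter_Suc_minus_inverse)

lemma sum_inverse_lam: "(\<Sum>k<n. 1 / lam (Suc k)) = lam n"
  by (simp add: lam_eq_lam_iter sum_inverse_lam_iter)

lemma mseq_eq_inverse_lam: "mseq = (\<lambda>n. 1 / lam (Suc n))"
  by (simp add: mseq_eq lam_eq_lam_iter)

lemma lam_Suc_sq_diff: "(lam (Suc n))\<^sup>2 - (lam n)\<^sup>2 = 2 - 1 / (lam (Suc n))\<^sup>2"
proof -
  have "(lam n)\<^sup>2 = (lam (Suc n) - 1 / lam (Suc n))\<^sup>2"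
    by (simp add: lam_Suc_minus_inverse)
  then have "(lam n)\<^sup>2 = (lam (Suc n))\<^sup>2 - 2 + 1 / (lam (Suc n))\<^sup>2"
    using lam_Suc_ge_1[of n] by (simp add: power2_diff power_divide)
  then show ?thesis
    by simp
qed

lemma lam_sq_bounds: "real n \<le> (lam n)\<^sup>2 \<and> (lam n)\<^sup>2 \<le> 2 * real n"
proof (induction n)
  case (Suc n)
  have "1 \<le> (lam (Suc n))\<^sup>2"
    using lam_Suc_ge_1[of n] by (simp add: one_le_power)
  then have "0 < 1 / (lam (Suc n))\<^sup>2" and "1 / (lam (Suc n))\<^sup>2 \<le> 1"
    using lam_pos[of "Suc n"] by (simp_all add: divide_le_eq)
  moreover have "real n \<le> (lam n)\<^sup>2" "(lam n)\<^sup>2 \<le> 2 * real n"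
    using Suc.IH by simp_all
  ultimately have "real n + 1 \<le> (lam (Suc n))\<^sup>2" "(lam (Suc n))\<^sup>2 \<le> 2 * real n + 2"
    using lam_Suc_sq_diff[of n] by linarith+
  then show ?case
    by simp
qed simp

lemma lam_bounds: "sqrt (real n) \<le> lam n \<and> lam n \<le> sqrt (2 * real n)"
  using lam_sq_bounds[of n] lam_nonneg[of n] real_le_rsqrt real_sqrt_le_iff
  by (metis real_sqrt_abs abs_of_nonneg)

lemma incseq_lam: "incseq lam"
proof (rule incseq_SucI)
  fix n
  have "1 / lam (Suc n) \<ge> 0"
    using lam_Suc_ge_1[of n] by simp
  then show "lam n \<le> lam (Suc n)"
    using lam_Suc_minus_inverse[of n] by linarith
qed

lemma filterlim_lam_at_top: "filterlim lam at_top sequentially"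
proof (rule filterlim_at_top_mono)
  show "filterlim (\<lambda>n. sqrt (real n)) at_top sequentially"
    by real_asymp
  show "\<forall>\<^sub>F n in sequentially. sqrt (real n) \<le> lam n"
    using lam_bounds by simp
qed

lemma inverse_lam_sq_tendsto_0: "(\<lambda>n. 1 / (lam n)\<^sup>2) \<longlonglongrightarrow> 0"
proof -
  have "filterlim (\<lambda>n. (lam n)\<^sup>2) at_top sequentially"
    using filterlim_lam_at_top by (intro filterlim_pow_at_top) simp_all
  then show ?thesis
    using tendsto_inverse_0_at_top by (simp add: inverse_eq_divide)
qed

lemma lam_ratio_eq: "n \<ge> 1 \<Longrightarrow> lam (Suc n) / lam n = 1 + 1 / (lam n * lam (Suc n))"
proof -
  assume "n \<ge> 1"
  have step: "lam (Suc n) - lam n = 1 / lam (Suc n)"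
    using lam_Suc_minus_inverse[of n] by linarith
  have "lam (Suc n) / lam n = 1 + (lam (Suc n) - lam n) / lam n"
    using lam_pos[OF \<open>n \<ge> 1\<close>] by (simp add: field_simps)
  then show ?thesis
    by (simp add: step)
qed

lemma lam_ratio_antimono: "n \<ge> 1 \<Longrightarrow> lam (n + 2) / lam (n + 1) \<le> lam (n + 1) / lam n"
proof -
  assume "n \<ge> 1"
  have "lam n * lam (Suc n) \<le> lam (Suc n) * lam (Suc (Suc n))"
    using incseq_lam lam_nonneg by (simp add: mult.commute mult_mono incseq_SucD)
  moreover have "lam n * lam (Suc n) > 0"
    using lam_pos[OF \<open>n \<ge> 1\<close>] lam_Suc_ge_1[of n] by simp
  ultimately have "1 / (lam (Suc n) * lam (Suc (Suc n))) \<le> 1 / (lam n * lam (Suc n))"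
    by (simp add: frac_le)
  then show ?thesis
    using lam_ratio_eq[OF \<open>n \<ge> 1\<close>] lam_ratio_eq[of "Suc n"] by simp
qed

lemma lam_ratio_tendsto_1: "(\<lambda>n. lam (Suc n) / lam n) \<longlonglongrightarrow> 1"
proof -
  have "(\<lambda>n. 1 / (lam n * lam (Suc n))) \<longlonglongrightarrow> 0"
  proof (rule Lim_null_comparison)
    show "\<forall>\<^sub>F n in sequentially. norm (1 / (lam n * lam (Suc n))) \<le> 1 / (lam n)\<^sup>2"
    proof (rule eventually_sequentiallyI[of 1])
      fix n :: nat
      assume "n \<ge> 1"
      then have "(lam n)\<^sup>2 \<le> lam n * lam (Suc n)" "(lam n)\<^sup>2 > 0"
        using incseq_SucD[OF incseq_lam, of n] lam_pos[of n]
        by (simp_all add: power2_eq_square mult_left_mono)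
      then show "norm (1 / (lam n * lam (Suc n))) \<le> 1 / (lam n)\<^sup>2"
        by (simp add: frac_le)
    qed
  qed (fact inverse_lam_sq_tendsto_0)
  then have "(\<lambda>n. 1 + 1 / (lam n * lam (Suc n))) \<longlonglongrightarrow> 1"
    using tendsto_add[OF tendsto_const[of 1]] by fastforce
  then show ?thesis
    by (rule Lim_transform_eventually) (auto simp: lam_ratio_eq intro!: eventually_sequentiallyI[of 1])
qed

lemma lam_sq_diff_tendsto_2: "(\<lambda>n. (lam (Suc n))\<^sup>2 - (lam n)\<^sup>2) \<longlonglongrightarrow> 2"
proof -
  have "(\<lambda>n. 2 - 1 / (lam (Suc n))\<^sup>2) \<longlonglongrightarrow> 2 - 0"
    using LIMSEQ_Suc[OF inverse_lam_sq_tendsto_0] by (intro tendsto_diff tendsto_const)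
  then show ?thesis
    by (simp only: lam_Suc_sq_diff) simp
qed

lemma mseq_tendsto_0: "mseq \<longlonglongrightarrow> 0"
proof -
  have "(\<lambda>n. inverse (lam (Suc n))) \<longlonglongrightarrow> 0"
    using LIMSEQ_Suc[OF tendsto_inverse_0_at_top[OF filterlim_lam_at_top]] .
  then show ?thesis
    by (simp add: mseq_eq_inverse_lam inverse_eq_divide)
qed

section \<open>Asymptotics of lambda\<close>

lemma lam_sq_deficit_eq: "2 * real n - (lam n)\<^sup>2 = (\<Sum>k=1..n. 1 / (lam k)\<^sup>2)"
proof (induction n)
  case (Suc n)
  then show ?case
    using lam_Suc_sq_diff[of n] by simp
qed simp

lemma lam_sq_deficit_bounds: "0 \<le> 2 * real n - (lam n)\<^sup>2 \<and> 2 * real n - (lam n)\<^sup>2 \<le> ln (real n) + 1"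
proof
  show "0 \<le> 2 * real n - (lam n)\<^sup>2"
    using lam_sq_bounds[of n] by simp
  have "(\<Sum>k=1..n. 1 / (lam k)\<^sup>2) \<le> (\<Sum>k=1..n. 1 / real k)"
    using lam_sq_bounds by (intro sum_mono frac_le) auto
  also have "\<dots> = harm n"
    by (simp add: harm_def inverse_eq_divide)
  finally show "2 * real n - (lam n)\<^sup>2 \<le> ln (real n) + 1"
    using harm_le_ln_plus_1[of n] by (simp add: lam_sq_deficit_eq)
qed

lemma inverse_lam_sq_deviation_bounds:
  assumes "k \<ge> 1"
  shows "0 \<le> 1 / (lam k)\<^sup>2 - 1 / (2 * real k)
    \<and> 1 / (lam k)\<^sup>2 - 1 / (2 * real k) \<le> (ln (real k) + 1) / (real k)\<^sup>2"
proof -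
  define e where "e = 2 * real k - (lam k)\<^sup>2"
  have k: "real k > 0"
    using assms by simp
  have lam_sq: "real k \<le> (lam k)\<^sup>2"
    using lam_sq_bounds[of k] by simp
  have e: "0 \<le> e" "e \<le> ln (real k) + 1"
    using lam_sq_deficit_bounds[of k] by (simp_all add: e_def)
  have "(lam k)\<^sup>2 > 0"
    using k lam_sq by linarith
  then have deviation: "1 / (lam k)\<^sup>2 - 1 / (2 * real k) = e / (2 * real k * (lam k)\<^sup>2)"
    using k by (simp add: e_def field_simps)
  have "e / (2 * real k * (lam k)\<^sup>2) \<le> e / (real k)\<^sup>2"
    using k lam_sq e by (intro divide_left_mono) (auto simp: power2_eq_square)
  also have "\<dots> \<le> (ln (real k) + 1) / (real k)\<^sup>2"
    using e by (intro divide_right_mono) auto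
  finally show ?thesis
    using k lam_sq e by (simp add: deviation)
qed

text \<open>2n - lambda_n^2 is the sum of the 1/lambda_k^2, which differ from the harmonic
  terms 1/(2k) by a summable sequence.\<close>
lemma lam_sq_deficit_minus_half_ln_bounded:
  obtains C where "\<And>n. n \<ge> 1 \<Longrightarrow> \<bar>2 * real n - (lam n)\<^sup>2 - ln (real n) / 2\<bar> \<le> C"
proof
  define b where "b = (\<lambda>k. (ln (real k) + 1) / (real k)\<^sup>2)"
  fix n :: nat
  assume "n \<ge> 1"
  have "(\<Sum>k=1..n. 1 / (2 * real k)) = harm n / 2"
    by (simp add: harm_def sum_divide_distrib inverse_eq_divide mult.commute)
  then have split: "2 * real n - (lam n)\<^sup>2 - ln (real n) / 2
      = (\<Sum>k=1..n. 1 / (lam k)\<^sup>2 - 1 / (2 * real k)) + (harm n - ln (real n)) / 2"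
    by (simp add: lam_sq_deficit_eq sum_subtractf diff_divide_distrib)
  have "0 \<le> (\<Sum>k=1..n. 1 / (lam k)\<^sup>2 - 1 / (2 * real k))"
    using inverse_lam_sq_deviation_bounds by (intro sum_nonneg) auto
  moreover have "(\<Sum>k=1..n. 1 / (lam k)\<^sup>2 - 1 / (2 * real k)) \<le> (\<Sum>k=1..n. b k)"
    using inverse_lam_sq_deviation_bounds by (intro sum_mono) (auto simp: b_def)
  moreover have "(\<Sum>k=1..n. b k) \<le> suminf b"
  proof (rule sum_le_suminf)
    show "summable b"
      using summable_ln_plus_1_over_sq by (simp only: b_def)
    show "0 \<le> b k" for k
      by (cases "k = 0") (simp_all add: b_def)
  qed simp
  moreover have "0 \<le> harm n - ln (real n)" "harm n - ln (real n) \<le> 1"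
    using \<open>n \<ge> 1\<close> euler_mascheroni_sequence_nonneg[of n] harm_le_ln_plus_1[of n] by auto
  ultimately have "0 \<le> 2 * real n - (lam n)\<^sup>2 - ln (real n) / 2 \<and>
      2 * real n - (lam n)\<^sup>2 - ln (real n) / 2 \<le> suminf b + 1"
    unfolding split by argo
  then show "\<bar>2 * real n - (lam n)\<^sup>2 - ln (real n) / 2\<bar> \<le> suminf b + 1"
    by simp
qed

lemma lam_sq_over_n_tendsto_2: "(\<lambda>n. (lam n)\<^sup>2 / real n) \<longlonglongrightarrow> 2"
proof -
  have "(\<lambda>n. (2 * real n - (lam n)\<^sup>2) / real n) \<longlonglongrightarrow> 0"
  proof (rule Lim_null_comparison)
    show "\<forall>\<^sub>F n in sequentially. norm ((2 * real n - (lam n)\<^sup>2) / real n) \<le> (ln (real n) + 1) / real n"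
      using lam_sq_deficit_bounds by (intro always_eventually allI) (simp add: divide_right_mono)
    show "(\<lambda>n. (ln (real n) + 1) / real n) \<longlonglongrightarrow> 0"
      by real_asymp
  qed
  then have "(\<lambda>n. 2 - (2 * real n - (lam n)\<^sup>2) / real n) \<longlonglongrightarrow> 2"
    using tendsto_diff[OF tendsto_const[of 2]] by fastforce
  then show ?thesis
    by (rule Lim_transform_eventually)
       (auto simp: field_simps intro!: eventually_sequentiallyI[of 1])
qed

lemma lam_sq_minus_2n_over_ln_tendsto: "(\<lambda>n. ((lam n)\<^sup>2 - 2 * real n) / ln (real n)) \<longlonglongrightarrow> - 1 / 2"
proof -
  obtain C where C: "\<And>n. n \<ge> 1 \<Longrightarrow> \<bar>2 * real n - (lam n)\<^sup>2 - ln (real n) / 2\<bar> \<le> C"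
    using lam_sq_deficit_minus_half_ln_bounded by blast
  have "(\<lambda>n. (2 * real n - (lam n)\<^sup>2 - ln (real n) / 2) / ln (real n)) \<longlonglongrightarrow> 0"
  proof (rule Lim_null_comparison)
    show "\<forall>\<^sub>F n in sequentially.
        norm ((2 * real n - (lam n)\<^sup>2 - ln (real n) / 2) / ln (real n)) \<le> C / ln (real n)"
      using C by (intro eventually_sequentiallyI[of 2]) (auto simp: divide_right_mono)
    show "(\<lambda>n. C / ln (real n)) \<longlonglongrightarrow> 0"
      by real_asymp
  qed
  then have "(\<lambda>n. - 1 / 2 - (2 * real n - (lam n)\<^sup>2 - ln (real n) / 2) / ln (real n)) \<longlonglongrightarrow> - 1 / 2"
    using tendsto_diff[OF tendsto_const[of "- 1 / 2"]] by fastforce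
  then show ?thesis
    by (rule Lim_transform_eventually)
       (auto simp: field_simps intro!: eventually_sequentiallyI[of 2])
qed

lemma lam_over_sqrt_tendsto_1: "(\<lambda>n. lam n / sqrt (2 * real n)) \<longlonglongrightarrow> 1"
proof -
  have "(\<lambda>n. sqrt ((lam n)\<^sup>2 / real n / 2)) \<longlonglongrightarrow> sqrt (2 / 2)"
    by (intro tendsto_real_sqrt tendsto_divide lam_sq_over_n_tendsto_2 tendsto_const) simp
  moreover have "sqrt ((lam n)\<^sup>2 / real n / 2) = lam n / sqrt (2 * real n)" for n
    using lam_nonneg[of n] by (simp add: real_sqrt_divide real_sqrt_mult)
  ultimately show ?thesis
    by simp
qed

lemma lam_shift_over_sqrt_tendsto_1: "(\<lambda>n. lam (n + j) / sqrt (2 * real (n + k))) \<longlonglongrightarrow> 1"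
proof -
  have "(\<lambda>n. lam (n + j) / sqrt (2 * real (n + j))) \<longlonglongrightarrow> 1"
    using LIMSEQ_ignore_initial_segment[OF lam_over_sqrt_tendsto_1] .
  moreover have "(\<lambda>n. sqrt (2 * real (n + j)) / sqrt (2 * real (n + k))) \<longlonglongrightarrow> 1"
    by real_asymp
  ultimately have "(\<lambda>n. lam (n + j) / sqrt (2 * real (n + j)) * (sqrt (2 * real (n + j)) / sqrt (2 * real (n + k))))
      \<longlonglongrightarrow> 1"
    using tendsto_mult by fastforce
  then show ?thesis
    by (rule Lim_transform_eventually) (auto intro!: eventually_sequentiallyI[of 1])
qed

section \<open>The kernel (1 - t^s) / (1 - t) and its s-derivative\<close>

definition geom_kernel :: "real \<Rightarrow> real \<Rightarrow> real" where
  "geom_kernel s t = (1 - t powr s) / (1 - t)"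

definition geom_kernel_deriv :: "real \<Rightarrow> real \<Rightarrow> real" where
  "geom_kernel_deriv s t = t powr s * (- ln t) / (1 - t)"

lemma borel_measurable_geom_kernel: "geom_kernel s \<in> borel_measurable borel"
  unfolding geom_kernel_def[abs_def] by measurable

lemma borel_measurable_geom_kernel_deriv: "geom_kernel_deriv s \<in> borel_measurable borel"
  unfolding geom_kernel_deriv_def[abs_def] by measurable

lemma geom_kernel_of_nat:
  assumes "0 \<le> t" "t < 1" "n \<ge> 1"
  shows "geom_kernel (real n) t = (\<Sum>k<n. t ^ k)"
  using assms by (simp add: geom_kernel_def powr_realpow' sum_gp_strict)

lemma geom_kernel_mono:
  assumes "0 \<le> t" "t < 1" "a \<le> b"
  shows "geom_kernel a t \<le> geom_kernel b t"
proof -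
  have "t powr b \<le> t powr a"
    using assms by (intro powr_mono') auto
  with assms show ?thesis
    unfolding geom_kernel_def by (intro divide_right_mono) auto
qed

lemma geom_kernel_bounds:
  assumes "0 \<le> t" "t < 1" "0 \<le> s"
  shows "0 \<le> geom_kernel s t \<and> geom_kernel s t \<le> real (nat \<lceil>s\<rceil> + 1)"
proof
  have "t powr s \<le> 1"
    using assms by (intro powr_le1) auto
  with assms show "0 \<le> geom_kernel s t"
    by (simp add: geom_kernel_def)
  have "geom_kernel s t \<le> geom_kernel (real (nat \<lceil>s\<rceil> + 1)) t"
    using assms by (intro geom_kernel_mono) (auto, linarith)
  also have "\<dots> = (\<Sum>k<nat \<lceil>s\<rceil> + 1. t ^ k)"
    using assms by (intro geom_kernel_of_nat) auto
  also have "\<dots> \<le> (\<Sum>k<nat \<lceil>s\<rceil> + 1. 1)"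
    using assms by (intro sum_mono power_le_one) auto
  finally show "geom_kernel s t \<le> real (nat \<lceil>s\<rceil> + 1)"
    by simp
qed

lemma has_real_derivative_geom_kernel:
  assumes "0 \<le> t" "t < 1"
  shows "((\<lambda>s. geom_kernel s t) has_real_derivative geom_kernel_deriv s t) (at s)"
proof (cases "t = 0")
  case False
  with assms have "((\<lambda>s. (1 - t powr s) / (1 - t)) has_real_derivative (0 - t powr s * ln t) / (1 - t)) (at s)"
    by (intro derivative_eq_intros) auto
  then show ?thesis
    by (simp add: geom_kernel_def geom_kernel_deriv_def)
qed (simp add: geom_kernel_def geom_kernel_deriv_def)

text \<open>Both bounds come from ln x \<le> x - 1, applied to x = t and x = 1/t.\<close>
lemma geom_kernel_deriv_bounds:
  assumes "0 \<le> t" "t < 1"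
  shows "t powr s \<le> geom_kernel_deriv s t \<and> geom_kernel_deriv s t \<le> t powr (s - 1)"
proof (cases "t = 0")
  case False
  with assms have t: "0 < t"
    by simp
  have "ln t \<le> t - 1"
    using t by (rule ln_le_minus_one)
  with assms have "1 \<le> - ln t / (1 - t)"
    by (simp add: field_simps)
  then have lower: "t powr s * 1 \<le> t powr s * (- ln t / (1 - t))"
    by (intro mult_left_mono) auto
  have "ln (1 / t) \<le> 1 / t - 1"
    using t by (intro ln_le_minus_one) auto
  with t have "t * (- ln t) \<le> 1 - t"
    by (simp add: ln_div field_simps)
  then have "t powr (s - 1) * (t * (- ln t)) / (1 - t) \<le> t powr (s - 1) * (1 - t) / (1 - t)"
    using assms by (intro divide_right_mono mult_left_mono) auto
  moreover have "t powr s = t powr (s - 1) * t"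
    using t by (simp add: powr_diff)
  ultimately show ?thesis
    using lower assms by (simp add: geom_kernel_deriv_def mult.assoc)
qed (simp add: geom_kernel_deriv_def)

lemma geom_kernel_deriv_nonneg:
  assumes "0 \<le> t" "t < 1"
  shows "0 \<le> geom_kernel_deriv s t"
  using geom_kernel_deriv_bounds[OF assms, of s] powr_ge_zero[of t s] by linarith

lemma geom_kernel_deriv_antimono:
  assumes "0 \<le> t" "t < 1" "a \<le> b"
  shows "geom_kernel_deriv b t \<le> geom_kernel_deriv a t"
proof -
  have "t powr b \<le> t powr a"
    using assms by (intro powr_mono') auto
  moreover have "0 \<le> - ln t"
    using assms by (cases "t = 0") auto
  then have "0 \<le> - ln t / (1 - t)"
    using assms by (intro divide_nonneg_pos) auto
  ultimately show ?thesis
    using mult_right_mono unfolding geom_kernel_deriv_def times_divide_eq_right[symmetric]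
    by blast
qed

text \<open>For 0 < u \<le> 1, write x = t^u: then u t^u (- ln t) = x (- ln x) \<le> 1 - x \<le> 1 - t.\<close>
lemma geom_kernel_deriv_le_inverse:
  assumes "0 \<le> t" "t < 1" "0 < u" "u \<le> 1"
  shows "geom_kernel_deriv u t \<le> 1 / u"
proof (cases "t = 0")
  case False
  with assms have t: "0 < t"
    by simp
  define x where "x = t powr u"
  have x: "0 < x"
    using t by (simp add: x_def)
  have "ln (1 / x) \<le> 1 / x - 1"
    using x by (intro ln_le_minus_one) auto
  moreover have "ln (1 / x) = - u * ln t"
    using t by (simp add: x_def ln_div ln_powr)
  ultimately have "x * (- u * ln t) \<le> x * (1 / x - 1)"
    using x by (intro mult_left_mono) auto
  moreover have "x * (1 / x - 1) = 1 - x"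
    using x by (simp add: field_simps)
  ultimately have "u * (x * (- ln t)) \<le> 1 - x"
    by (simp add: algebra_simps)
  moreover have "t powr 1 \<le> t powr u"
    using assms by (intro powr_mono') auto
  ultimately have "u * (x * (- ln t)) \<le> 1 - t"
    using t by (simp add: x_def)
  then have "u * geom_kernel_deriv u t \<le> 1"
    using assms by (simp add: geom_kernel_deriv_def x_def field_simps)
  with assms show ?thesis
    by (simp add: field_simps)
qed (use assms in \<open>simp add: geom_kernel_deriv_def\<close>)

lemma geom_kernel_deriv_le_max:
  assumes "0 \<le> t" "t < 1" "0 < c" "c \<le> u"
  shows "geom_kernel_deriv u t \<le> max 1 (1 / c)"
proof (cases "u \<le> 1")
  case True
  have "geom_kernel_deriv u t \<le> geom_kernel_deriv c t"
    using assms by (intro geom_kernel_deriv_antimono)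
  also have "\<dots> \<le> 1 / c"
    using assms True by (intro geom_kernel_deriv_le_inverse) auto
  finally show ?thesis
    by simp
next
  case False
  have "geom_kernel_deriv u t \<le> t powr (u - 1)"
    using geom_kernel_deriv_bounds[OF assms(1,2)] by blast
  also have "\<dots> \<le> 1"
    using assms False by (intro powr_le1) auto
  finally show ?thesis
    by simp
qed

section \<open>The function f of a probability measure on [0, 1)\<close>

locale unit_interval_prob = prob_space \<mu> for \<mu> :: "real measure" +
  assumes sets_eq_borel: "sets \<mu> = sets borel"
    and AE_in_unit_interval: "AE t in \<mu>. 0 \<le> t \<and> t < 1"
begin

lemma borel_measurable_of_borel: "f \<in> borel_measurable borel \<Longrightarrow> f \<in> borel_measurable \<mu>"
  by (subst measurable_cong_sets[OF sets_eq_borel refl])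

lemma integrable_if_bounded:
  fixes f :: "real \<Rightarrow> real"
  assumes "f \<in> borel_measurable borel" and "\<And>t. 0 \<le> t \<Longrightarrow> t < 1 \<Longrightarrow> \<bar>f t\<bar> \<le> B"
  shows "integrable \<mu> f"
proof (rule integrable_const_bound[where B = B])
  show "AE t in \<mu>. norm (f t) \<le> B"
    using AE_in_unit_interval by eventually_elim (use assms in auto)
qed (use assms in \<open>auto intro: borel_measurable_of_borel\<close>)

lemma integrable_powr: "0 \<le> s \<Longrightarrow> integrable \<mu> (\<lambda>t. t powr s)"
  by (rule integrable_if_bounded[where B = 1]) (auto intro: powr_le1)

lemma integral_powr_antimono:
  assumes "0 \<le> a" "a \<le> b"
  shows "(\<integral>t. t powr b \<partial>\<mu>) \<le> (\<integral>t. t powr a \<partial>\<mu>)"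
proof (rule integral_mono_AE)
  show "AE t in \<mu>. t powr b \<le> t powr a"
    using AE_in_unit_interval by eventually_elim (use assms in \<open>auto intro: powr_mono'\<close>)
qed (use assms integrable_powr in auto)

text \<open>k = 0 is excluded since 0 powr 0 = 0 but 0 ^ 0 = 1.\<close>
lemma integral_powr_of_nat: "k \<ge> 1 \<Longrightarrow> (\<integral>t. t powr real k \<partial>\<mu>) = (\<integral>t. t ^ k \<partial>\<mu>)"
proof (rule integral_cong_AE)
  show "AE t in \<mu>. t powr real k = t ^ k" if "k \<ge> 1"
    using AE_in_unit_interval by eventually_elim (use that in \<open>simp add: powr_realpow'\<close>)
qed (auto intro: borel_measurable_of_borel)

lemma integrable_power: "integrable \<mu> (\<lambda>t. t ^ k)"
  by (rule integrable_if_bounded[where B = 1]) (auto simp: power_le_one power_abs)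

lemma integrable_geom_kernel:
  assumes "0 \<le> s"
  shows "integrable \<mu> (geom_kernel s)"
proof (rule integrable_if_bounded[OF borel_measurable_geom_kernel])
  show "\<bar>geom_kernel s t\<bar> \<le> real (nat \<lceil>s\<rceil> + 1)" if "0 \<le> t" "t < 1" for t
    using geom_kernel_bounds[OF that assms] by (simp add: abs_le_iff)
qed

lemma integrable_geom_kernel_deriv:
  assumes "0 < s"
  shows "integrable \<mu> (geom_kernel_deriv s)"
proof (rule integrable_if_bounded[OF borel_measurable_geom_kernel_deriv])
  show "\<bar>geom_kernel_deriv s t\<bar> \<le> max 1 (1 / s)" if "0 \<le> t" "t < 1" for t
    using geom_kernel_deriv_nonneg[OF that] geom_kernel_deriv_le_max[OF that assms order.refl]
    by simp
qed

lemma fmu_eq_integral_geom_kernel: "fmu \<mu> s = (\<integral>t. geom_kernel s t \<partial>\<mu>)"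
  by (simp add: fmu_def geom_kernel_def)

lemma fmu_of_nat:
  assumes "n \<ge> 1"
  shows "fmu \<mu> (real n) = (\<Sum>k<n. \<integral>t. t ^ k \<partial>\<mu>)"
proof -
  have "fmu \<mu> (real n) = (\<integral>t. (\<Sum>k<n. t ^ k) \<partial>\<mu>)"
    unfolding fmu_eq_integral_geom_kernel
  proof (rule integral_cong_AE)
    show "AE t in \<mu>. geom_kernel (real n) t = (\<Sum>k<n. t ^ k)"
      using AE_in_unit_interval by eventually_elim (use assms geom_kernel_of_nat in auto)
  qed (auto intro: borel_measurable_of_borel borel_measurable_geom_kernel)
  then show ?thesis
    using integrable_power by simp
qed

lemma fmu_mono:
  assumes "0 \<le> a" "a \<le> b"
  shows "fmu \<mu> a \<le> fmu \<mu> b"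
  unfolding fmu_eq_integral_geom_kernel
proof (rule integral_mono_AE)
  show "AE t in \<mu>. geom_kernel a t \<le> geom_kernel b t"
    using AE_in_unit_interval by eventually_elim (use assms geom_kernel_mono in auto)
qed (use assms integrable_geom_kernel in auto)

lemma has_real_derivative_fmu:
  assumes "s > 0"
  shows "(fmu \<mu> has_real_derivative (\<integral>t. geom_kernel_deriv s t \<partial>\<mu>)) (at s)"
proof -
  have near_s: "s / 2 \<le> u" if "u \<in> ball s (s / 2)" for u
    using that by (auto simp: dist_real_def abs_if split: if_splits)
  have "((\<lambda>u. \<integral>t. geom_kernel u t \<partial>\<mu>) has_real_derivative (\<integral>t. geom_kernel_deriv s t \<partial>\<mu>)) (at s)"
  proof (rule has_real_derivative_integral[where r = "s / 2" and w = "\<lambda>_. max 1 (1 / (s / 2))"])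
    show "integrable \<mu> (geom_kernel u)" if "u \<in> ball s (s / 2)" for u
      using near_s[OF that] assms by (intro integrable_geom_kernel) auto
    show "geom_kernel_deriv s \<in> borel_measurable \<mu>"
      by (intro borel_measurable_of_borel borel_measurable_geom_kernel_deriv)
    show "AE t in \<mu>. \<forall>u \<in> ball s (s / 2). ((\<lambda>v. geom_kernel v t) has_real_derivative geom_kernel_deriv u t) (at u)
        \<and> \<bar>geom_kernel_deriv u t\<bar> \<le> max 1 (1 / (s / 2))"
      using AE_in_unit_interval
    proof eventually_elim
      case (elim t)
      show ?case
      proof (intro ballI conjI)
        fix u
        assume "u \<in> ball s (s / 2)"
        show "((\<lambda>v. geom_kernel v t) has_real_derivative geom_kernel_deriv u t) (at u)"
          using elim by (intro has_real_derivative_geom_kernel) auto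
        show "\<bar>geom_kernel_deriv u t\<bar> \<le> max 1 (1 / (s / 2))"
          using elim assms near_s[OF \<open>u \<in> ball s (s / 2)\<close>] geom_kernel_deriv_nonneg[of t u]
            geom_kernel_deriv_le_max[of t "s / 2" u]
          by simp
      qed
    qed
  qed (use assms in auto)
  moreover have "fmu \<mu> = (\<lambda>u. \<integral>t. geom_kernel u t \<partial>\<mu>)"
    using fmu_eq_integral_geom_kernel by blast
  ultimately show ?thesis
    by simp
qed

lemma deriv_fmu_bounds:
  assumes "s \<ge> 1"
  shows "(\<integral>t. t powr s \<partial>\<mu>) \<le> deriv (fmu \<mu>) s \<and> deriv (fmu \<mu>) s \<le> (\<integral>t. t powr (s - 1) \<partial>\<mu>)"
proof -
  have deriv: "deriv (fmu \<mu>) s = (\<integral>t. geom_kernel_deriv s t \<partial>\<mu>)"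
    using assms by (intro DERIV_imp_deriv has_real_derivative_fmu) auto
  have integrable: "integrable \<mu> (geom_kernel_deriv s)"
    using assms by (intro integrable_geom_kernel_deriv) auto
  show ?thesis
    unfolding deriv
  proof
    show "(\<integral>t. t powr s \<partial>\<mu>) \<le> (\<integral>t. geom_kernel_deriv s t \<partial>\<mu>)"
    proof (rule integral_mono_AE)
      show "AE t in \<mu>. t powr s \<le> geom_kernel_deriv s t"
        using AE_in_unit_interval by eventually_elim (use geom_kernel_deriv_bounds in auto)
    qed (use assms integrable integrable_powr in auto)
    show "(\<integral>t. geom_kernel_deriv s t \<partial>\<mu>) \<le> (\<integral>t. t powr (s - 1) \<partial>\<mu>)"
    proof (rule integral_mono_AE)
      show "AE t in \<mu>. geom_kernel_deriv s t \<le> t powr (s - 1)"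
        using AE_in_unit_interval by eventually_elim (use geom_kernel_deriv_bounds in auto)
    qed (use assms integrable integrable_powr in auto)
  qed
qed

end

locale mseq_moment_measure = unit_interval_prob +
  assumes moments: "\<forall>n. (\<integral>t. t ^ n \<partial>\<mu>) = mseq n"
begin

lemma moment_eq_inverse_lam: "(\<integral>t. t ^ n \<partial>\<mu>) = 1 / lam (Suc n)"
  using moments by (simp add: mseq_eq_inverse_lam)

lemma fmu_of_nat_eq_lam: "n \<ge> 1 \<Longrightarrow> fmu \<mu> (real n) = lam n"
  by (simp add: fmu_of_nat moment_eq_inverse_lam sum_inverse_lam)

lemma fmu_over_sqrt_tendsto_1: "((\<lambda>s. fmu \<mu> s / sqrt (2 * s)) \<longlongrightarrow> 1) at_top"
proof (rule tendsto_at_top_sandwich_nat[where N = 1])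
  show "(\<lambda>n. lam n / sqrt (2 * real (n + 1))) \<longlonglongrightarrow> 1"
    using lam_shift_over_sqrt_tendsto_1[of 0 1] by simp
  show "(\<lambda>n. lam (n + 1) / sqrt (2 * real n)) \<longlonglongrightarrow> 1"
    using lam_shift_over_sqrt_tendsto_1[of 1 0] by simp
  fix n :: nat and s :: real
  assume n: "n \<ge> 1" "real n \<le> s" "s < real n + 1"
  have "lam n \<le> fmu \<mu> s"
    using n fmu_mono[of "real n" s] by (simp add: fmu_of_nat_eq_lam)
  moreover have "fmu \<mu> s \<le> lam (n + 1)"
    using n fmu_mono[of s "real (n + 1)"] fmu_of_nat_eq_lam[of "n + 1"] by simp
  ultimately show "lam n / sqrt (2 * real (n + 1)) \<le> fmu \<mu> s / sqrt (2 * s)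
      \<and> fmu \<mu> s / sqrt (2 * s) \<le> lam (n + 1) / sqrt (2 * real n)"
    using n lam_nonneg[of n] by (auto intro!: frac_le)
qed

lemma deriv_fmu_bounds_lam:
  assumes "n \<ge> 2" "real n \<le> s" "s < real n + 1"
  shows "1 / lam (n + 2) \<le> deriv (fmu \<mu>) s \<and> deriv (fmu \<mu>) s \<le> 1 / lam n"
proof
  have "1 / lam (n + 2) = (\<integral>t. t ^ (n + 1) \<partial>\<mu>)"
    using moment_eq_inverse_lam[of "n + 1"] by simp
  also have "\<dots> = (\<integral>t. t powr real (n + 1) \<partial>\<mu>)"
    by (rule integral_powr_of_nat[symmetric]) simp
  also have "\<dots> \<le> (\<integral>t. t powr s \<partial>\<mu>)"
    using assms by (intro integral_powr_antimono) auto
  also have "\<dots> \<le> deriv (fmu \<mu>) s"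
    using assms deriv_fmu_bounds[of s] by simp
  finally show "1 / lam (n + 2) \<le> deriv (fmu \<mu>) s" .
  have "deriv (fmu \<mu>) s \<le> (\<integral>t. t powr (s - 1) \<partial>\<mu>)"
    using assms deriv_fmu_bounds[of s] by simp
  also have "\<dots> \<le> (\<integral>t. t powr real (n - 1) \<partial>\<mu>)"
    using assms by (intro integral_powr_antimono) auto
  also have "\<dots> = (\<integral>t. t ^ (n - 1) \<partial>\<mu>)"
    using assms by (intro integral_powr_of_nat) simp
  also have "\<dots> = 1 / lam n"
    using assms by (simp add: moment_eq_inverse_lam)
  finally show "deriv (fmu \<mu>) s \<le> 1 / lam n" .
qed

lemma deriv_fmu_times_sqrt_tendsto_1: "((\<lambda>s. deriv (fmu \<mu>) s * sqrt (2 * s)) \<longlongrightarrow> 1) at_top"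
proof (rule tendsto_at_top_sandwich_nat[where N = 2])
  show "(\<lambda>n. sqrt (2 * real n) / lam (n + 2)) \<longlonglongrightarrow> 1"
    using tendsto_inverse[OF lam_shift_over_sqrt_tendsto_1[of 2 0]] by simp
  show "(\<lambda>n. sqrt (2 * real (n + 1)) / lam n) \<longlonglongrightarrow> 1"
    using tendsto_inverse[OF lam_shift_over_sqrt_tendsto_1[of 0 1]] by simp
  fix n :: nat and s :: real
  assume n: "n \<ge> 2" "real n \<le> s" "s < real n + 1"
  note bounds = deriv_fmu_bounds_lam[OF n]
  have "0 \<le> 1 / lam (n + 2)"
    using lam_nonneg[of "n + 2"] by simp
  with bounds have "0 \<le> deriv (fmu \<mu>) s"
    by linarith
  then have "1 / lam (n + 2) * sqrt (2 * real n) \<le> deriv (fmu \<mu>) s * sqrt (2 * s)"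
    and "deriv (fmu \<mu>) s * sqrt (2 * s) \<le> 1 / lam n * sqrt (2 * real (n + 1))"
    using n bounds lam_nonneg[of n] by (intro mult_mono; simp)+
  then show "sqrt (2 * real n) / lam (n + 2) \<le> deriv (fmu \<mu>) s * sqrt (2 * s)
      \<and> deriv (fmu \<mu>) s * sqrt (2 * s) \<le> sqrt (2 * real (n + 1)) / lam n"
    by simp
qed

end

theorem lemma3p3:
  fixes \<mu> :: "real measure"
  assumes "prob_space \<mu>"
    and "sets \<mu> = sets borel"
    and "emeasure \<mu> {0..1} = 1"
    and "\<forall>n. (\<integral>t. t ^ n \<partial>\<mu>) = mseq n"
  shows "(\<forall>n. sqrt (real n) \<le> lam n \<and> lam n \<le> sqrt (2 * real n))
    \<and> incseq lam
    \<and> filterlim lam at_top sequentially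
    \<and> (\<forall>n\<ge>1. lam (n + 2) / lam (n + 1) \<le> lam (n + 1) / lam n)
    \<and> (\<lambda>n. lam (Suc n) / lam n) \<longlonglongrightarrow> 1
    \<and> (\<lambda>n. (lam (Suc n))\<^sup>2 - (lam n)\<^sup>2) \<longlonglongrightarrow> 2
    \<and> (\<lambda>n. (lam n)\<^sup>2 / real n) \<longlonglongrightarrow> 2
    \<and> (\<lambda>n. ((lam n)\<^sup>2 - 2 * real n) / ln (real n)) \<longlonglongrightarrow> - 1 / 2
    \<and> ((\<lambda>s. fmu \<mu> s / sqrt (2 * s)) \<longlongrightarrow> 1) at_top
    \<and> (\<forall>s>0. fmu \<mu> differentiable (at s))
    \<and> ((\<lambda>s. deriv (fmu \<mu>) s * sqrt (2 * s)) \<longlongrightarrow> 1) at_top"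
proof -
  have "AE t in \<mu>. 0 \<le> t \<and> t < 1"
    using assms mseq_tendsto_0 by (intro AE_less_1_if_moments_tendsto_0) auto
  with assms interpret mseq_moment_measure \<mu>
    by (intro mseq_moment_measure.intro unit_interval_prob.intro unit_interval_prob_axioms.intro
        mseq_moment_measure_axioms.intro)
  have "\<forall>s>0. fmu \<mu> differentiable (at s)"
    using has_real_derivative_fmu by (auto simp: real_differentiable_def)
  then show ?thesis
    using lam_bounds incseq_lam filterlim_lam_at_top lam_ratio_antimono lam_ratio_tendsto_1
      lam_sq_diff_tendsto_2 lam_sq_over_n_tendsto_2 lam_sq_minus_2n_over_ln_tendsto
      fmu_over_sqrt_tendsto_1 deriv_fmu_times_sqrt_tendsto_1
    by blast
qed

end
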